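(* Let $n\ge 3$ and let $\mathcal N_{2n}$ be the neckband on $2n$ vertices. Then for every vertex $v$ of $\mathcal N_{2n}$, $\gamma_M(\mathcal N_{2n}-v)=\gamma_M(\mathcal N_{2n})-1$; that is, every vertex of $\mathcal N_{2n}$ is a 1-critical-vertex.
   Context: The neckband $\mathcal N_{2n}$ is the graph consisting of the $2n$-cycle $C_{2n}=v_1v_2\cdots v_{2n}v_1$ together with the $n$ chords $a_i=(v_{2i-1},v_{2i+2})$, $i=1,\dots,n$, where indices are taken modulo $2n$ (with representatives in $\{1,\dots,2n\}$). $\gamma_M(H)$ is the maximum genus of a connected graph $H$ (largest $k$ such that $H$ embeds cellularly in the orientable surface of genus $k$). A vertex $v$ is a 1-critical-vertex of $G$ if $G-v$ is connected and $\gamma_M(G-v)=\gamma_M(G)-1$. *)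

theory Defs
  imports Main
begin

text \<open>Simple graphs are given as a pair of a vertex set V and an edge set E,
  each edge being a 2-element set of vertices.\<close>

definition neighbors :: "'a set set \<Rightarrow> 'a \<Rightarrow> 'a set" where
  "neighbors E v = {u. u \<noteq> v \<and> {u, v} \<in> E}"

definition darts :: "'a set set \<Rightarrow> ('a \<times> 'a) set" where
  "darts E = {(u, v). u \<noteq> v \<and> {u, v} \<in> E}"

definition graph_connected :: "'a set \<Rightarrow> 'a set set \<Rightarrow> bool" where
  "graph_connected V E \<longleftrightarrow> V \<noteq> {} \<and>
     (\<forall>u\<in>V. \<forall>v\<in>V. (u, v) \<in> (darts E)\<^sup>*)"

definition delete_vertex :: "'a set \<Rightarrow> 'a set set \<Rightarrow> 'a \<Rightarrow> 'a set \<times> 'a set set" where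
  "delete_vertex V E v = (V - {v}, {e \<in> E. v \<notin> e})"

definition is_rotation_system :: "'a set \<Rightarrow> 'a set set \<Rightarrow> ('a \<Rightarrow> 'a \<Rightarrow> 'a) \<Rightarrow> bool" where
  "is_rotation_system V E \<rho> \<longleftrightarrow>
     (\<forall>v\<in>V. bij_betw (\<rho> v) (neighbors E v) (neighbors E v) \<and>
        (\<forall>x\<in>neighbors E v. \<forall>y\<in>neighbors E v. \<exists>k. (\<rho> v ^^ k) x = y))"

definition face_perm :: "('a \<Rightarrow> 'a \<Rightarrow> 'a) \<Rightarrow> 'a \<times> 'a \<Rightarrow> 'a \<times> 'a" where
  "face_perm \<rho> d = (snd d, \<rho> (snd d) (fst d))"

definition faces :: "'a set set \<Rightarrow> ('a \<Rightarrow> 'a \<Rightarrow> 'a) \<Rightarrow> ('a \<times> 'a) set set" where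
  "faces E \<rho> = (\<lambda>d. {(face_perm \<rho> ^^ k) d | k. True}) ` darts E"

definition num_faces :: "'a set set \<Rightarrow> ('a \<Rightarrow> 'a \<Rightarrow> 'a) \<Rightarrow> nat" where
  "num_faces E \<rho> = (if E = {} then 1 else card (faces E \<rho>))"

text \<open>Genus of the cellular orientable embedding determined by a rotation system
  (Euler's formula  |V| - |E| + F = 2 - 2g).\<close>

definition emb_genus :: "'a set \<Rightarrow> 'a set set \<Rightarrow> ('a \<Rightarrow> 'a \<Rightarrow> 'a) \<Rightarrow> int" where
  "emb_genus V E \<rho> = (2 - int (card V) + int (card E) - int (num_faces E \<rho>)) div 2"

definition max_genus :: "'a set \<Rightarrow> 'a set set \<Rightarrow> int" where
  "max_genus V E = Max {emb_genus V E \<rho> | \<rho>. is_rotation_system V E \<rho>}"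

text \<open>The neckband N_{2n}: vertices 1..2n, cycle edges {i, i+1} (mod 2n), and
  chords a_i = {2i-1, 2i+2} (indices mod 2n, representatives in 1..2n).\<close>

definition neckband_V :: "nat \<Rightarrow> nat set" where
  "neckband_V n = {1..2*n}"

definition neckband_E :: "nat \<Rightarrow> nat set set" where
  "neckband_E n =
     {{i, i mod (2*n) + 1} | i. i \<in> {1..2*n}} \<union>
     {{2*i - 1, (2*i + 1) mod (2*n) + 1} | i. i \<in> {1..n}}"

end

theory Submission
  imports Defs
begin

text \<open>Every cellular embedding has at least one face, so by Euler's formula the maximum genus of
  a connected graph is at most \<open>\<lfloor>\<beta>/2\<rfloor>\<close>, where \<open>\<beta> = |E| - |V| + 1\<close> is its Betti number,
  with equality as soon as some rotation system has one face, or two faces when \<open>\<beta>\<close> is odd.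
  For the neckband \<open>\<beta> = n + 1\<close>, and after deleting a vertex \<open>\<beta> = n - 1\<close>; since
  \<open>\<lfloor>(n - 1)/2\<rfloor> = \<lfloor>(n + 1)/2\<rfloor> - 1\<close>, it remains to find such rotation systems.
  The neckband is vertex-transitive, so we work on a relabelled copy in which the deleted
  vertex is 0. There the rotation (predecessor, successor, chord) at every vertex, reversed at 0,
  resp. with 0 deleted, has boundary walks that can be traced explicitly: they run along the
  cycle and then alternately along chords and cycle edges, and cover all darts with one walk
  if n is odd and with two walks otherwise.\<close>

section \<open>Orbits of a self-map\<close>

definition orbit_of :: "('b \<Rightarrow> 'b) \<Rightarrow> 'b \<Rightarrow> 'b set" where
  "orbit_of f d = range (\<lambda>k. (f ^^ k) d)"

lemma faces_eq_orbits: "faces E \<rho> = orbit_of (face_perm \<rho>) ` darts E"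
  unfolding faces_def orbit_of_def by (simp add: full_SetCompr_eq)

lemma orbit_of_self: "d \<in> orbit_of f d"
  unfolding orbit_of_def by (rule range_eqI[of _ _ 0]) simp

lemma orbit_of_closed: "f ` orbit_of f d \<subseteq> orbit_of f d"
proof (rule image_subsetI)
  fix x assume "x \<in> orbit_of f d"
  then obtain k where "x = (f ^^ k) d" unfolding orbit_of_def by blast
  then have "f x = (f ^^ Suc k) d" by simp
  then show "f x \<in> orbit_of f d" unfolding orbit_of_def by (rule range_eqI)
qed

lemma orbit_of_subset: "x \<in> orbit_of f d \<Longrightarrow> orbit_of f x \<subseteq> orbit_of f d"
proof
  fix y assume "x \<in> orbit_of f d" "y \<in> orbit_of f x"
  then obtain k j where "x = (f ^^ k) d" "y = (f ^^ j) x" unfolding orbit_of_def by blast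
  then have "y = (f ^^ (j + k)) d" by (simp only: funpow_add comp_apply)
  then show "y \<in> orbit_of f d" unfolding orbit_of_def by (rule range_eqI)
qed

lemma funpow_mem: "f ` D \<subseteq> D \<Longrightarrow> d \<in> D \<Longrightarrow> (f ^^ k) d \<in> D"
  by (induction k) (simp_all add: image_subset_iff)

lemma funpow_periodic:
  assumes "finite D" "f ` D \<subseteq> D" "inj_on f D" "d \<in> D"
  obtains p where "p > 0" "(f ^^ p) d = d"
proof -
  have "bij_betw f D D"
    unfolding bij_betw_def using endo_inj_surj[OF assms(1-3)] assms(3) by blast
  then have inj_pow: "inj_on (f ^^ k) D" for k
    by (rule bij_betw_imp_inj_on[OF bij_betw_funpow])
  have "\<not> inj_on (\<lambda>k. (f ^^ k) d) {0..card D}"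
  proof
    assume "inj_on (\<lambda>k. (f ^^ k) d) {0..card D}"
    then have "card {0..card D} \<le> card D"
      by (rule card_inj_on_le) (auto intro: funpow_mem[OF assms(2,4)] assms(1))
    then show False by simp
  qed
  then obtain a b where "a \<noteq> b" "(f ^^ a) d = (f ^^ b) d"
    unfolding inj_on_def by blast
  then obtain i j where ij: "i < j" "(f ^^ i) d = (f ^^ j) d"
    by (metis linorder_neqE_nat)
  moreover have "(f ^^ i) ((f ^^ (j - i)) d) = (f ^^ (i + (j - i))) d"
    by (simp only: funpow_add comp_apply)
  ultimately have "(f ^^ i) ((f ^^ (j - i)) d) = (f ^^ i) d"
    by simp
  then have "(f ^^ (j - i)) d = d"
    by (rule inj_onD[OF inj_pow _ funpow_mem[OF assms(2,4)] assms(4)])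
  with ij(1) show ?thesis by (intro that[of "j - i"]) simp_all
qed

lemma orbit_of_eq:
  assumes "finite D" "f ` D \<subseteq> D" "inj_on f D" "d \<in> D" "x \<in> orbit_of f d"
  shows "orbit_of f x = orbit_of f d"
proof
  show "orbit_of f x \<subseteq> orbit_of f d" using orbit_of_subset[OF assms(5)] .
  obtain k where x: "x = (f ^^ k) d" using assms(5) unfolding orbit_of_def by blast
  obtain p where p: "p > 0" "(f ^^ p) d = d" using funpow_periodic[OF assms(1-4)] .
  have period_mult: "(f ^^ (p * j)) d = d" for j
    by (induction j) (simp_all add: funpow_add p(2))
  have "k \<le> p * (k + 1)" using p(1) mult_le_mono1[of 1 p "k + 1"] by simp
  then have exp: "p * (k + 1) - k + k = p * (k + 1)" by simp
  have "(f ^^ (p * (k + 1) - k)) x = (f ^^ (p * (k + 1) - k + k)) d"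
    by (simp only: x funpow_add comp_apply)
  also have "\<dots> = d" unfolding exp by (rule period_mult)
  finally have "d \<in> orbit_of f x" unfolding orbit_of_def by (rule range_eqI[OF sym])
  then show "orbit_of f d \<subseteq> orbit_of f x" by (rule orbit_of_subset)
qed

section \<open>Faces of rotation systems and the Euler bound\<close>

definition betti :: "'a set \<Rightarrow> 'a set set \<Rightarrow> int" where
  "betti V E = int (card E) - int (card V) + 1"

lemma mem_darts_iff: "(a, b) \<in> darts E \<longleftrightarrow> b \<in> neighbors E a"
  unfolding darts_def neighbors_def by (auto simp: insert_commute)

lemma darts_subset: "\<forall>e\<in>E. e \<subseteq> V \<Longrightarrow> darts E \<subseteq> V \<times> V"
  unfolding darts_def by auto

lemma neighbors_subset: "\<forall>e\<in>E. e \<subseteq> V \<Longrightarrow> neighbors E a \<subseteq> V"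
  unfolding neighbors_def by auto

lemma finite_darts: "finite V \<Longrightarrow> \<forall>e\<in>E. e \<subseteq> V \<Longrightarrow> finite (darts E)"
  using darts_subset by (metis finite_SigmaI finite_subset)

definition cyclic_perm_on :: "('b \<Rightarrow> 'b) \<Rightarrow> 'b set \<Rightarrow> bool" where
  "cyclic_perm_on g S \<longleftrightarrow> bij_betw g S S \<and> (\<forall>x\<in>S. \<forall>y\<in>S. \<exists>k. (g ^^ k) x = y)"

lemma is_rotation_system_iff:
  "is_rotation_system V E \<rho> \<longleftrightarrow> (\<forall>v\<in>V. cyclic_perm_on (\<rho> v) (neighbors E v))"
  unfolding is_rotation_system_def cyclic_perm_on_def ..

lemma rotation_maps_neighbors:
  assumes "is_rotation_system V E \<rho>" "b \<in> V" "a \<in> neighbors E b"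
  shows "\<rho> b a \<in> neighbors E b"
  using assms unfolding is_rotation_system_def bij_betw_def by blast

lemma face_perm_darts:
  assumes "is_rotation_system V E \<rho>" "\<forall>e\<in>E. e \<subseteq> V"
  shows "face_perm \<rho> ` darts E \<subseteq> darts E"
proof
  fix y assume "y \<in> face_perm \<rho> ` darts E"
  then obtain a b where ab: "(a, b) \<in> darts E" "y = (b, \<rho> b a)"
    unfolding face_perm_def by auto
  have "b \<in> V" using darts_subset[OF assms(2)] ab(1) by auto
  moreover have "a \<in> neighbors E b" using ab(1) unfolding darts_def neighbors_def by auto
  ultimately show "y \<in> darts E"
    using rotation_maps_neighbors[OF assms(1)] ab(2) by (simp add: mem_darts_iff)
qed

lemma inj_on_face_perm:
  assumes "is_rotation_system V E \<rho>" "\<forall>e\<in>E. e \<subseteq> V"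
  shows "inj_on (face_perm \<rho>) (darts E)"
proof (rule inj_onI)
  fix x y assume xy: "x \<in> darts E" "y \<in> darts E" "face_perm \<rho> x = face_perm \<rho> y"
  obtain a b a' where x: "x = (a, b)" and y: "y = (a', b)" and eq: "\<rho> b a = \<rho> b a'"
    using xy(3) unfolding face_perm_def by (metis prod.collapse prod.inject)
  have "b \<in> V" using darts_subset[OF assms(2)] xy(1) x by auto
  then have "inj_on (\<rho> b) (neighbors E b)"
    using assms(1) unfolding is_rotation_system_def bij_betw_def by blast
  moreover have "a \<in> neighbors E b" "a' \<in> neighbors E b"
    using xy(1,2) unfolding x y darts_def neighbors_def by auto
  ultimately show "x = y" using eq x y by (simp add: inj_on_eq_iff)
qed

lemma num_faces_le_cover:
  assumes "is_rotation_system V E \<rho>" "\<forall>e\<in>E. e \<subseteq> V" "finite V"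
    and "A \<subseteq> darts E" "finite A" "A \<noteq> {}"
    and "darts E \<subseteq> (\<Union>d\<in>A. orbit_of (face_perm \<rho>) d)"
  shows "num_faces E \<rho> \<le> card A"
proof -
  have "faces E \<rho> \<subseteq> orbit_of (face_perm \<rho>) ` A"
  proof
    fix F assume "F \<in> faces E \<rho>"
    then obtain d where d: "d \<in> darts E" "F = orbit_of (face_perm \<rho>) d"
      unfolding faces_eq_orbits by auto
    then obtain d0 where "d0 \<in> A" "d \<in> orbit_of (face_perm \<rho>) d0" using assms(7) by blast
    moreover from this have "orbit_of (face_perm \<rho>) d = orbit_of (face_perm \<rho>) d0"
      using orbit_of_eq[OF finite_darts[OF assms(3,2)] face_perm_darts[OF assms(1,2)]
          inj_on_face_perm[OF assms(1,2)]] assms(4) by blast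
    ultimately show "F \<in> orbit_of (face_perm \<rho>) ` A" using d(2) by blast
  qed
  then have "card (faces E \<rho>) \<le> card (orbit_of (face_perm \<rho>) ` A)"
    using assms(5) by (intro card_mono) auto
  also have "\<dots> \<le> card A" using assms(5) by (rule card_image_le)
  finally have "card (faces E \<rho>) \<le> card A" .
  moreover have "E \<noteq> {}" using assms(4,6) unfolding darts_def by blast
  ultimately show ?thesis unfolding num_faces_def by simp
qed

lemma num_faces_bounds:
  assumes "finite V" "\<forall>e\<in>E. e \<subseteq> V" "darts E \<noteq> {}"
  shows "1 \<le> num_faces E \<rho>" "num_faces E \<rho> \<le> card (darts E)"
proof -
  have E: "E \<noteq> {}" using assms(3) unfolding darts_def by auto
  have "finite (faces E \<rho>)" "faces E \<rho> \<noteq> {}"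
    unfolding faces_eq_orbits using finite_darts[OF assms(1,2)] assms(3) by simp_all
  then show "1 \<le> num_faces E \<rho>" unfolding num_faces_def using E
    by (simp add: Suc_leI card_gt_0_iff)
  show "num_faces E \<rho> \<le> card (darts E)" unfolding num_faces_def faces_eq_orbits using E
    by (simp add: card_image_le finite_darts[OF assms(1,2)])
qed

lemma max_genus_eq_half_betti:
  assumes "finite V" "\<forall>e\<in>E. e \<subseteq> V" "darts E \<noteq> {}"
    and "is_rotation_system V E \<rho>" "int (num_faces E \<rho>) \<le> 1 + betti V E mod 2"
  shows "max_genus V E = betti V E div 2"
proof -
  have genus: "emb_genus V E \<rho>' = (betti V E + 1 - int (num_faces E \<rho>')) div 2" for \<rho>'
    unfolding emb_genus_def betti_def by (simp add: algebra_simps)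
  note faces_bounds = num_faces_bounds[OF assms(1-3)]
  let ?S = "{emb_genus V E \<rho>' | \<rho>'. is_rotation_system V E \<rho>'}"
  have upper: "emb_genus V E \<rho>' \<le> betti V E div 2" for \<rho>'
  proof -
    have "1 \<le> int (num_faces E \<rho>')" using faces_bounds(1)[of \<rho>'] by simp
    then show ?thesis unfolding genus by (intro zdiv_mono1) simp_all
  qed
  have lower: "(betti V E + 1 - int (card (darts E))) div 2 \<le> emb_genus V E \<rho>'" for \<rho>'
  proof -
    have "int (num_faces E \<rho>') \<le> int (card (darts E))" using faces_bounds(2)[of \<rho>'] by simp
    then show ?thesis unfolding genus by (intro zdiv_mono1) simp_all
  qed
  have fin: "finite ?S"
    by (rule finite_subset[of _ "{(betti V E + 1 - int (card (darts E))) div 2 .. betti V E div 2}"])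
      (use upper lower in auto)
  have mem: "betti V E div 2 \<in> ?S"
  proof -
    have "b div 2 \<le> (b + 1 - F) div 2" if "F \<le> 1 + b mod 2" for b F :: int
      using that by presburger
    then have "betti V E div 2 \<le> (betti V E + 1 - int (num_faces E \<rho>)) div 2"
      using assms(5) .
    then have "emb_genus V E \<rho> = betti V E div 2" using upper[of \<rho>] unfolding genus by simp
    then show ?thesis using assms(4) by (metis (mono_tags, lifting) mem_Collect_eq)
  qed
  show ?thesis
    unfolding max_genus_def
  proof (rule Max_eqI[OF fin _ mem])
    fix g assume "g \<in> ?S"
    then show "g \<le> betti V E div 2" using upper by blast
  qed
qed

lemma num_faces_le_two_orbits:
  assumes "is_rotation_system V E \<rho>" "\<forall>e\<in>E. e \<subseteq> V" "finite V" "d1 \<in> darts E" "d2 \<in> darts E"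
    and "\<And>T. face_perm \<rho> ` T \<subseteq> T \<Longrightarrow> d1 \<in> T \<Longrightarrow> d2 \<in> T \<or> P \<Longrightarrow> darts E \<subseteq> T"
  shows "num_faces E \<rho> \<le> (if P then 1 else 2)"
proof -
  define A where "A = (if P then {d1} else {d1, d2})"
  let ?T = "\<Union>d\<in>A. orbit_of (face_perm \<rho>) d"
  have "face_perm \<rho> ` ?T \<subseteq> ?T" by (simp add: image_UN UN_mono orbit_of_closed)
  moreover have "d1 \<in> ?T" "d2 \<in> ?T \<or> P" unfolding A_def by (auto simp: orbit_of_self)
  ultimately have cover: "darts E \<subseteq> ?T" by (rule assms(6))
  have "num_faces E \<rho> \<le> card A"
    by (rule num_faces_le_cover[OF assms(1-3) _ _ _ cover]) (use assms(4,5) in \<open>auto simp: A_def\<close>)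
  also have "card A \<le> (if P then 1 else 2)" unfolding A_def by (simp add: card_insert_if)
  finally show ?thesis .
qed

lemma neighbors_delete: "x \<noteq> z \<Longrightarrow> neighbors {e \<in> E. z \<notin> e} x = neighbors E x - {z}"
  unfolding neighbors_def by auto

lemma edges_at_vertex:
  assumes "\<forall>e\<in>E. card e = 2"
  shows "{e \<in> E. z \<in> e} = (\<lambda>u. {z, u}) ` neighbors E z"
proof
  show "{e \<in> E. z \<in> e} \<subseteq> (\<lambda>u. {z, u}) ` neighbors E z"
  proof
    fix e assume e: "e \<in> {e \<in> E. z \<in> e}"
    then obtain u where "u \<noteq> z" "e = {z, u}"
      using assms by (metis (no_types, lifting) card_2_iff insert_commute insert_iff mem_Collect_eq singletonD)
    then show "e \<in> (\<lambda>u. {z, u}) ` neighbors E z"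
      using e unfolding neighbors_def by (auto simp: insert_commute)
  qed
  show "(\<lambda>u. {z, u}) ` neighbors E z \<subseteq> {e \<in> E. z \<in> e}"
    unfolding neighbors_def by (auto simp: insert_commute)
qed

lemma card_edges_at_vertex:
  assumes "\<forall>e\<in>E. card e = 2"
  shows "card {e \<in> E. z \<in> e} = card (neighbors E z)"
proof -
  have "inj_on (\<lambda>u. {z, u}) (neighbors E z)"
    unfolding inj_on_def neighbors_def by (auto simp: doubleton_eq_iff)
  then show ?thesis unfolding edges_at_vertex[OF assms] by (rule card_image)
qed

section \<open>Relabelling a graph\<close>

definition relabel_rotation :: "('a \<Rightarrow> 'b) \<Rightarrow> 'a set \<Rightarrow> ('a \<Rightarrow> 'a \<Rightarrow> 'a) \<Rightarrow> 'b \<Rightarrow> 'b \<Rightarrow> 'b" where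
  "relabel_rotation \<psi> V \<rho> w u = \<psi> (\<rho> (inv_into V \<psi> w) (inv_into V \<psi> u))"

locale relabelling =
  fixes \<psi> :: "'a \<Rightarrow> 'b" and V :: "'a set" and E :: "'a set set"
  assumes inj: "inj_on \<psi> V" and edges_subset: "\<forall>e\<in>E. e \<subseteq> V"
begin

abbreviation "E' \<equiv> (`) \<psi> ` E"
abbreviation "\<rho>' \<equiv> relabel_rotation \<psi> V"

lemma image_edges_subset: "\<forall>e\<in>E'. e \<subseteq> \<psi> ` V"
  using edges_subset by auto

lemma inv_into_relabel [simp]: "a \<in> V \<Longrightarrow> inv_into V \<psi> (\<psi> a) = a"
  using inj by (rule inv_into_f_f)

lemma relabel_eq_iff [simp]: "a \<in> V \<Longrightarrow> b \<in> V \<Longrightarrow> \<psi> a = \<psi> b \<longleftrightarrow> a = b"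
  using inj by (simp add: inj_on_eq_iff)

lemma image_edge_iff:
  assumes "a \<in> V" "b \<in> V"
  shows "{\<psi> a, \<psi> b} \<in> E' \<longleftrightarrow> {a, b} \<in> E"
proof
  assume "{\<psi> a, \<psi> b} \<in> E'"
  then obtain e where e: "e \<in> E" "\<psi> ` e = \<psi> ` {a, b}" by auto
  have "e = {a, b}"
    using e edges_subset assms inj_on_image_eq_iff[OF inj, of e "{a, b}"] by auto
  then show "{a, b} \<in> E" using e(1) by simp
qed (metis image_empty image_insert imageI)

lemma neighbors_image:
  assumes "a \<in> V"
  shows "neighbors E' (\<psi> a) = \<psi> ` neighbors E a"
proof
  show "neighbors E' (\<psi> a) \<subseteq> \<psi> ` neighbors E a"
  proof
    fix u' assume u': "u' \<in> neighbors E' (\<psi> a)"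
    then have "u' \<in> \<psi> ` V" using image_edges_subset unfolding neighbors_def by blast
    then obtain u where u: "u \<in> V" "u' = \<psi> u" by auto
    then show "u' \<in> \<psi> ` neighbors E a"
      using u' image_edge_iff[OF u(1) assms] assms unfolding neighbors_def by auto
  qed
  show "\<psi> ` neighbors E a \<subseteq> neighbors E' (\<psi> a)"
  proof
    fix u' assume "u' \<in> \<psi> ` neighbors E a"
    then obtain u where u: "u \<in> neighbors E a" "u' = \<psi> u" by auto
    have "u \<in> V" using neighbors_subset[OF edges_subset] u(1) by auto
    then show "u' \<in> neighbors E' (\<psi> a)"
      using u image_edge_iff assms unfolding neighbors_def by auto
  qed
qed

lemma darts_image: "darts E' = map_prod \<psi> \<psi> ` darts E"
proof
  show "darts E' \<subseteq> map_prod \<psi> \<psi> ` darts E"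
  proof
    fix d assume d: "d \<in> darts E'"
    then obtain a b where ab: "a \<in> V" "b \<in> V" "d = (\<psi> a, \<psi> b)"
      using darts_subset[OF image_edges_subset] by blast
    then have "(a, b) \<in> darts E" using d image_edge_iff[OF ab(1,2)] unfolding darts_def by auto
    then show "d \<in> map_prod \<psi> \<psi> ` darts E" using ab(3) by force
  qed
  show "map_prod \<psi> \<psi> ` darts E \<subseteq> darts E'"
  proof
    fix d assume "d \<in> map_prod \<psi> \<psi> ` darts E"
    then obtain a b where ab: "(a, b) \<in> darts E" "d = (\<psi> a, \<psi> b)" by auto
    then have "a \<in> V" "b \<in> V" using darts_subset[OF edges_subset] by auto
    then show "d \<in> darts E'" using ab image_edge_iff unfolding darts_def by auto
  qed
qed

lemma rotation_system_image:
  assumes rot: "is_rotation_system V E \<rho>"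
  shows "is_rotation_system (\<psi> ` V) E' (\<rho>' \<rho>)"
  unfolding is_rotation_system_iff
proof
  fix w assume "w \<in> \<psi> ` V"
  then obtain a where a: "a \<in> V" "w = \<psi> a" by auto
  let ?N = "neighbors E a"
  have N: "neighbors E' w = \<psi> ` ?N" using neighbors_image[OF a(1)] a(2) by simp
  have NV: "?N \<subseteq> V" by (rule neighbors_subset[OF edges_subset])
  have bij: "bij_betw (\<rho> a) ?N ?N" and cyc: "\<forall>x\<in>?N. \<forall>y\<in>?N. \<exists>k. (\<rho> a ^^ k) x = y"
    using rot a(1) unfolding is_rotation_system_def by auto
  have step: "\<rho>' \<rho> w (\<psi> u) = \<psi> (\<rho> a u)" if "u \<in> ?N" for u
    using that NV a unfolding relabel_rotation_def by auto
  have relabel: "bij_betw \<psi> ?N (\<psi> ` ?N)"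
    using inj_on_subset[OF inj NV] by (rule inj_on_imp_bij_betw)
  have "bij_betw (\<psi> \<circ> \<rho> a \<circ> inv_into ?N \<psi>) (\<psi> ` ?N) (\<psi> ` ?N)"
    by (rule bij_betw_trans[OF bij_betw_inv_into[OF relabel] bij_betw_trans[OF bij relabel]])
  moreover have "(\<psi> \<circ> \<rho> a \<circ> inv_into ?N \<psi>) x = \<rho>' \<rho> w x" if "x \<in> \<psi> ` ?N" for x
    using that step inv_into_f_f[OF inj_on_subset[OF inj NV]] by auto
  ultimately have "bij_betw (\<rho>' \<rho> w) (\<psi> ` ?N) (\<psi> ` ?N)" using bij_betw_cong by blast
  moreover have iter: "(\<rho>' \<rho> w ^^ k) (\<psi> u) = \<psi> ((\<rho> a ^^ k) u)" if "u \<in> ?N" for u k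
  proof (induction k)
    case (Suc k)
    have "(\<rho> a ^^ k) u \<in> ?N"
      using funpow_mem[of "\<rho> a" ?N] bij that unfolding bij_betw_def by blast
    then show ?case using Suc step by simp
  qed simp
  ultimately show "cyclic_perm_on (\<rho>' \<rho> w) (neighbors E' w)"
    unfolding N cyclic_perm_on_def using cyc by fastforce
qed

lemma num_faces_image_le:
  assumes rot: "is_rotation_system V E \<rho>" and fin: "finite V"
  shows "num_faces E' (\<rho>' \<rho>) \<le> num_faces E \<rho>"
proof -
  let ?f = "face_perm \<rho>" and ?g = "face_perm (\<rho>' \<rho>)" and ?m = "map_prod \<psi> \<psi>"
  have step: "?g (?m d) = ?m (?f d)" if "d \<in> darts E" for d
    using that darts_subset[OF edges_subset]
    unfolding face_perm_def relabel_rotation_def by auto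
  have iter: "(?g ^^ k) (?m d) = ?m ((?f ^^ k) d)" if "d \<in> darts E" for d k
  proof (induction k)
    case (Suc k)
    have "(?f ^^ k) d \<in> darts E" using funpow_mem[OF face_perm_darts[OF rot edges_subset] that] .
    then show ?case using Suc step by simp
  qed simp
  have "orbit_of ?g (?m d) = ?m ` orbit_of ?f d" if "d \<in> darts E" for d
    unfolding orbit_of_def image_image using iter[OF that] by simp
  then have "faces E' (\<rho>' \<rho>) = (`) ?m ` faces E \<rho>"
    unfolding faces_eq_orbits darts_image image_image by (intro image_cong) auto
  moreover have "finite (faces E \<rho>)"
    unfolding faces_eq_orbits using finite_darts[OF fin edges_subset] by simp
  ultimately show ?thesis unfolding num_faces_def by (auto intro: card_image_le)
qed

lemma card_edges_image: "card E' = card E"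
  using inj_on_image_eq_iff[OF inj] edges_subset by (intro card_image inj_onI) blast

lemma connected_image:
  assumes "graph_connected V E"
  shows "graph_connected (\<psi> ` V) E'"
proof -
  have "(\<psi> u, \<psi> v) \<in> (darts E')\<^sup>*" if "(u, v) \<in> (darts E)\<^sup>*" for u v
    using that
  proof (induction rule: rtrancl_induct)
    case (step y z)
    then have "(\<psi> y, \<psi> z) \<in> darts E'" unfolding darts_image by force
    with step(3) show ?case by (rule rtrancl_into_rtrancl)
  qed simp
  then show ?thesis using assms unfolding graph_connected_def by auto
qed

end

lemma cyclic_perm_on_pair:
  assumes "g p = q" "g q = p"
  shows "cyclic_perm_on g {p, q}"
  unfolding cyclic_perm_on_def bij_betw_def inj_on_def
proof (intro conjI ballI impI)
  fix x y assume "x \<in> {p, q}" "y \<in> {p, q}"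
  then have "(g ^^ 0) x = y \<or> (g ^^ 1) x = y" using assms by auto
  then show "\<exists>k. (g ^^ k) x = y" by blast
qed (use assms in auto)

lemma cyclic_perm_on_triple:
  assumes "g p = q" "g q = r" "g r = p" "distinct [p, q, r]"
  shows "cyclic_perm_on g {p, q, r}"
  unfolding cyclic_perm_on_def bij_betw_def inj_on_def
proof (intro conjI ballI impI)
  fix x y assume "x \<in> {p, q, r}" "y \<in> {p, q, r}"
  then have "(g ^^ 0) x = y \<or> (g ^^ 1) x = y \<or> (g ^^ 2) x = y"
    using assms by (auto simp: numeral_2_eq_2)
  then show "\<exists>k. (g ^^ k) x = y" by blast
qed (use assms in auto)

definition rot3 :: "'a \<Rightarrow> 'a \<Rightarrow> 'a \<Rightarrow> 'a \<Rightarrow> 'a" where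
  "rot3 a b c y = (if y = a then b else if y = b then c else a)"

lemma rot3_simps:
  assumes "distinct [a, b, c]"
  shows "rot3 a b c a = b" "rot3 a b c b = c" "rot3 a b c c = a"
  using assms unfolding rot3_def by auto

lemma cyclic_perm_on_rot3: "distinct [a, b, c] \<Longrightarrow> cyclic_perm_on (rot3 a b c) {a, b, c}"
  by (intro cyclic_perm_on_triple rot3_simps)

lemma cyclic_perm_on_rot3_skip:
  assumes "distinct [a, b, c]"
  shows "cyclic_perm_on (\<lambda>y. if rot3 a b c y = z then rot3 a b c z else rot3 a b c y)
           ({a, b, c} - {z})"
  using assms
  by (cases "z = a"; cases "z = b"; cases "z = c")
    (auto simp: rot3_simps insert_Diff_if insert_commute
      intro!: cyclic_perm_on_pair cyclic_perm_on_triple)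

section \<open>The model graph\<close>

text \<open>The model graph on \<open>{0..<N}\<close>: the cycle \<open>0, 1, \<dots>, N - 1\<close> together with the chords
  \<open>{x, x + 3}\<close> (mod N) for even x. It is the neckband relabelled by \<open>y \<mapsto> y + 1\<close>.\<close>

definition cyc_prev :: "nat \<Rightarrow> nat \<Rightarrow> nat" where
  "cyc_prev N x = (if x = 0 then N - 1 else x - 1)"

definition cyc_next :: "nat \<Rightarrow> nat \<Rightarrow> nat" where
  "cyc_next N x = (if x = N - 1 then 0 else x + 1)"

definition chord :: "nat \<Rightarrow> nat \<Rightarrow> nat" where
  "chord N x = (if even x then (if x + 3 < N then x + 3 else x + 3 - N)
                else (if 3 \<le> x then x - 3 else x + N - 3))"

definition model_edges :: "nat \<Rightarrow> nat set set" where
  "model_edges N = {{x, cyc_next N x} | x. x < N} \<union> {{x, chord N x} | x. x < N \<and> even x}"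

definition model_edges_del :: "nat \<Rightarrow> nat set set" where
  "model_edges_del N = {e \<in> model_edges N. 0 \<notin> e}"

definition rot_std :: "nat \<Rightarrow> nat \<Rightarrow> nat \<Rightarrow> nat" where
  "rot_std N x = rot3 (cyc_prev N x) (cyc_next N x) (chord N x)"

text \<open>Reversing the standard rotation at vertex 0, resp. deleting vertex 0 from it, gives
  embeddings with one face if \<open>N mod 4 = 2\<close> and at most two faces otherwise.\<close>

definition rot_full :: "nat \<Rightarrow> nat \<Rightarrow> nat \<Rightarrow> nat" where
  "rot_full N x =
     (if x = 0 then rot3 (cyc_next N 0) (cyc_prev N 0) (chord N 0) else rot_std N x)"

definition rot_del :: "nat \<Rightarrow> nat \<Rightarrow> nat \<Rightarrow> nat" where
  "rot_del N x y = (if rot_std N x y = 0 then rot_std N x 0 else rot_std N x y)"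

locale model =
  fixes N :: nat
  assumes even_N: "even N" and N_ge_6: "6 \<le> N"
begin

lemma model_less:
  "x < N \<Longrightarrow> cyc_prev N x < N" "x < N \<Longrightarrow> cyc_next N x < N" "x < N \<Longrightarrow> chord N x < N"
  using N_ge_6 unfolding cyc_prev_def cyc_next_def chord_def by auto

lemma cyc_next_prev: "x < N \<Longrightarrow> cyc_next N (cyc_prev N x) = x"
  and cyc_prev_next: "x < N \<Longrightarrow> cyc_prev N (cyc_next N x) = x"
  using N_ge_6 unfolding cyc_prev_def cyc_next_def by auto

lemma chord_chord: "x < N \<Longrightarrow> chord N (chord N x) = x"
  using N_ge_6 even_N unfolding chord_def by (auto; presburger)

lemma even_chord_iff: "x < N \<Longrightarrow> even (chord N x) \<longleftrightarrow> odd x"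
  using N_ge_6 even_N unfolding chord_def by (auto; presburger)

lemma model_distinct: "x < N \<Longrightarrow> distinct [x, cyc_prev N x, cyc_next N x, chord N x]"
  using N_ge_6 even_N unfolding cyc_prev_def cyc_next_def chord_def by (auto; presburger)

lemma model_values:
  "0 < x \<Longrightarrow> cyc_prev N x = x - 1" "cyc_prev N 0 = N - 1"
  "x + 1 < N \<Longrightarrow> cyc_next N x = x + 1" "cyc_next N (N - 1) = 0"
  "even x \<Longrightarrow> x + 3 < N \<Longrightarrow> chord N x = x + 3" "chord N (N - 2) = 1"
  "odd x \<Longrightarrow> 3 \<le> x \<Longrightarrow> chord N x = x - 3" "chord N (Suc 0) = N - 2"
  using N_ge_6 even_N unfolding cyc_prev_def cyc_next_def chord_def by auto

lemma model_edges_subset: "\<forall>e\<in>model_edges N. e \<subseteq> {0..<N}"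
proof
  fix e assume "e \<in> model_edges N"
  then obtain x where "x < N" "e = {x, cyc_next N x} \<or> e = {x, chord N x}"
    unfolding model_edges_def by blast
  then show "e \<subseteq> {0..<N}" using model_less by auto
qed

lemma model_edges_del_subset: "\<forall>e\<in>model_edges_del N. e \<subseteq> {1..<N}"
proof
  fix e assume "e \<in> model_edges_del N"
  then have "e \<subseteq> {0..<N}" "0 \<notin> e"
    using model_edges_subset unfolding model_edges_del_def by auto
  then show "e \<subseteq> {1..<N}" by (auto simp: subset_iff) (metis Suc_leI gr0I)
qed

lemma model_edges_at:
  assumes "x < N"
  shows "{cyc_prev N x, x} \<in> model_edges N" "{cyc_next N x, x} \<in> model_edges N"
    "{chord N x, x} \<in> model_edges N"
proof -
  have "{cyc_prev N x, cyc_next N (cyc_prev N x)} \<in> model_edges N"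
    using assms model_less unfolding model_edges_def by blast
  then show "{cyc_prev N x, x} \<in> model_edges N" using cyc_next_prev[OF assms] by simp
  have "{x, cyc_next N x} \<in> model_edges N" using assms unfolding model_edges_def by blast
  then show "{cyc_next N x, x} \<in> model_edges N" by (simp add: insert_commute)
  show "{chord N x, x} \<in> model_edges N"
  proof (cases "even x")
    case True
    then have "{x, chord N x} \<in> model_edges N" using assms unfolding model_edges_def by blast
    then show ?thesis by (simp add: insert_commute)
  next
    case False
    then have "{chord N x, chord N (chord N x)} \<in> model_edges N"
      using assms model_less even_chord_iff unfolding model_edges_def by blast
    then show ?thesis using chord_chord[OF assms] by simp
  qed
qed

lemma neighbors_model:
  assumes "x < N"
  shows "neighbors (model_edges N) x = {cyc_prev N x, cyc_next N x, chord N x}"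
proof
  show "neighbors (model_edges N) x \<subseteq> {cyc_prev N x, cyc_next N x, chord N x}"
  proof
    fix u assume "u \<in> neighbors (model_edges N) x"
    then have u: "u \<noteq> x" "{u, x} \<in> model_edges N" unfolding neighbors_def by auto
    then consider (cycle) y where "y < N" "{u, x} = {y, cyc_next N y}"
      | (chord) y where "y < N" "{u, x} = {y, chord N y}"
      unfolding model_edges_def by blast
    then show "u \<in> {cyc_prev N x, cyc_next N x, chord N x}"
    proof cases
      case cycle
      then have "u = y \<and> x = cyc_next N y \<or> u = cyc_next N y \<and> x = y"
        using u(1) by (auto simp: doubleton_eq_iff)
      then show ?thesis using cyc_prev_next[OF cycle(1)] by auto
    next
      case chord
      then have "u = y \<and> x = chord N y \<or> u = chord N y \<and> x = y"
        using u(1) by (auto simp: doubleton_eq_iff)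
      then show ?thesis using chord_chord[OF chord(1)] by auto
    qed
  qed
  show "{cyc_prev N x, cyc_next N x, chord N x} \<subseteq> neighbors (model_edges N) x"
    using model_edges_at[OF assms] model_distinct[OF assms] unfolding neighbors_def by simp
qed

lemma neighbors_model_del:
  "x < N \<Longrightarrow> x \<noteq> 0 \<Longrightarrow>
    neighbors (model_edges_del N) x = {cyc_prev N x, cyc_next N x, chord N x} - {0}"
  unfolding model_edges_del_def by (simp add: neighbors_delete neighbors_model)

lemma rotation_system_full: "is_rotation_system {0..<N} (model_edges N) (rot_full N)"
  unfolding is_rotation_system_iff
proof
  fix x assume "x \<in> {0..<N}"
  then have x: "x < N" by simp
  show "cyclic_perm_on (rot_full N x) (neighbors (model_edges N) x)"
  proof (cases "x = 0")
    case True
    have "{cyc_prev N x, cyc_next N x, chord N x} = {cyc_next N x, cyc_prev N x, chord N x}"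
      by auto
    moreover have dist: "distinct [cyc_next N x, cyc_prev N x, chord N x]"
      using model_distinct[OF x] by auto
    ultimately show ?thesis
      using cyclic_perm_on_rot3[OF dist] True
      unfolding neighbors_model[OF x] rot_full_def by simp
  next
    case False
    have "distinct [cyc_prev N x, cyc_next N x, chord N x]"
      using model_distinct[OF x] by auto
    then show ?thesis
      using cyclic_perm_on_rot3 False unfolding neighbors_model[OF x] rot_full_def rot_std_def
      by simp
  qed
qed

lemma rotation_system_del: "is_rotation_system {1..<N} (model_edges_del N) (rot_del N)"
  unfolding is_rotation_system_iff
proof
  fix x assume "x \<in> {1..<N}"
  then have x: "x < N" "x \<noteq> 0" by auto
  have "rot_del N x = (\<lambda>y. if rot_std N x y = 0 then rot_std N x 0 else rot_std N x y)"
    unfolding rot_del_def by (rule ext) simp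
  moreover have "distinct [cyc_prev N x, cyc_next N x, chord N x]"
    using model_distinct[OF x(1)] by auto
  ultimately show "cyclic_perm_on (rot_del N x) (neighbors (model_edges_del N) x)"
    using cyclic_perm_on_rot3_skip[of _ _ _ 0]
    unfolding neighbors_model_del[OF x] rot_std_def by simp
qed

lemma connected_model_del: "graph_connected {1..<N} (model_edges_del N)"
proof -
  let ?R = "(darts (model_edges_del N))\<^sup>*"
  have step: "(a, a + 1) \<in> ?R \<and> (a + 1, a) \<in> ?R" if "1 \<le> a" "a + 1 < N" for a
  proof -
    have "{a, a + 1} \<in> model_edges N"
      using that model_values(3)[of a] unfolding model_edges_def by force
    then have "{a, a + 1} \<in> model_edges_del N" using that unfolding model_edges_del_def by auto
    then show ?thesis unfolding darts_def by (auto simp: insert_commute)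
  qed
  have from_1: "(1, b) \<in> ?R \<and> (b, 1) \<in> ?R" if "1 \<le> b" "b < N" for b
    using that
  proof (induction b)
    case (Suc b)
    show ?case
    proof (cases "b = 0")
      case False
      then have "(1, b) \<in> ?R \<and> (b, 1) \<in> ?R" using Suc by simp
      with step[of b] False Suc.prems show ?thesis by (auto intro: rtrancl_trans)
    qed simp
  qed simp
  show ?thesis unfolding graph_connected_def
  proof (intro conjI ballI)
    show "{1..<N} \<noteq> {}" using N_ge_6 by simp
    fix u v assume "u \<in> {1..<N}" "v \<in> {1..<N}"
    then show "(u, v) \<in> ?R" using from_1 by (meson atLeastLessThan_iff rtrancl_trans)
  qed
qed

lemma card_model_edge: "e \<in> model_edges N \<Longrightarrow> card e = 2"
  unfolding model_edges_def using model_distinct by auto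

lemma card_model_edges: "card (model_edges N) = N + N div 2"
proof -
  let ?C = "(\<lambda>x. {x, cyc_next N x}) ` {0..<N}"
  let ?D = "(\<lambda>x. {x, chord N x}) ` {x. x < N \<and> even x}"
  have "inj_on (\<lambda>x. {x, cyc_next N x}) {0..<N}"
  proof (rule inj_onI)
    fix x y assume "x \<in> {0..<N}" "y \<in> {0..<N}" "{x, cyc_next N x} = {y, cyc_next N y}"
    then show "x = y"
      using model_distinct cyc_prev_next by (auto simp: doubleton_eq_iff) metis
  qed
  then have "card ?C = N" by (simp add: card_image)
  have "inj_on (\<lambda>x. {x, chord N x}) {x. x < N \<and> even x}"
    using even_chord_iff by (auto intro!: inj_onI simp: doubleton_eq_iff)
  moreover have "{x. x < N \<and> even x} = (\<lambda>k. 2 * k) ` {..<N div 2}"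
    using even_N by (auto elim!: evenE)
  ultimately have "card ?D = N div 2"
    by (simp add: card_image inj_on_def)
  moreover have "?C \<inter> ?D = {}"
  proof -
    have "{x, cyc_next N x} \<noteq> {y, chord N y}" if "x < N" "y < N" "even y" for x y
      using that model_distinct[of x] model_distinct[of y] cyc_prev_next[of x] even_chord_iff[of y]
      by (auto simp: doubleton_eq_iff)
    then show ?thesis by auto
  qed
  moreover have "model_edges N = ?C \<union> ?D" unfolding model_edges_def by auto
  ultimately show ?thesis using \<open>card ?C = N\<close> by (simp add: card_Un_disjoint)
qed

lemma card_model_edges_del: "card (model_edges_del N) = N + N div 2 - 3"
proof -
  have "card {e \<in> model_edges N. 0 \<in> e} = 3"
    using card_edges_at_vertex[of "model_edges N" 0] card_model_edge neighbors_model[of 0]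
      model_distinct[of 0] N_ge_6 by simp
  moreover have "model_edges_del N = model_edges N - {e \<in> model_edges N. 0 \<in> e}"
    unfolding model_edges_del_def by auto
  moreover have "finite (model_edges N)"
    using model_edges_subset by (meson finite_Pow_iff finite_atLeastLessThan finite_subset subsetI PowI)
  ultimately show ?thesis using card_model_edges by (simp add: card_Diff_subset)
qed

section \<open>Tracing the boundary walks\<close>

lemma rot_std_simps:
  assumes "x < N"
  shows "rot_std N x (cyc_prev N x) = cyc_next N x" "rot_std N x (cyc_next N x) = chord N x"
    "rot_std N x (chord N x) = cyc_prev N x"
  using model_distinct[OF assms] unfolding rot_std_def by (simp_all add: rot3_simps)

lemma rot_full_zero:
  "rot_full N 0 (cyc_prev N 0) = chord N 0" "rot_full N 0 (cyc_next N 0) = cyc_prev N 0"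
  using model_distinct[of 0] N_ge_6 unfolding rot_full_def by (simp_all add: rot3_simps)

lemma model_darts_cases:
  assumes "(a, b) \<in> darts (model_edges N)"
  obtains (forward) "b = a + 1" "a + 2 \<le> N"
    | (wrap) "a = N - 1" "b = 0"
    | (wrap_back) "a = 0" "b = N - 1"
    | (back_even) "even a" "2 \<le> a" "a + 2 \<le> N" "b = a - 1"
    | (back_odd) "odd a" "3 \<le> a" "b = a - 1"
    | (back_one) "a = 1" "b = 0"
    | (chord_up) "even a" "a + 4 \<le> N" "b = a + 3"
    | (chord_last) "a = N - 2" "b = 1"
    | (chord_down) "odd a" "5 \<le> a" "a + 3 \<le> N" "b = a - 3"
    | (chord_three) "a = 3" "b = 0"
    | (chord_top) "a = N - 1" "b = N - 4"
    | (chord_one) "a = 1" "b = N - 2"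
proof -
  have "a < N" using darts_subset[OF model_edges_subset] assms by auto
  then have "b \<in> {cyc_prev N a, cyc_next N a, chord N a}"
    using assms neighbors_model by (simp add: mem_darts_iff)
  then consider "b = cyc_prev N a" | "b = cyc_next N a" | "b = chord N a" by blast
  then show thesis
  proof cases
    case 1
    then have "a = 0 \<and> b = N - 1 \<or> even a \<and> 2 \<le> a \<and> a + 2 \<le> N \<and> b = a - 1
        \<or> odd a \<and> 3 \<le> a \<and> b = a - 1 \<or> a = 1 \<and> b = 0"
      using \<open>a < N\<close> even_N unfolding cyc_prev_def
      by (cases "a = 0"; cases "a = 1"; simp; presburger)
    then show thesis using that by blast
  next
    case 2
    then have "b = a + 1 \<and> a + 2 \<le> N \<or> a = N - 1 \<and> b = 0"
      using \<open>a < N\<close> unfolding cyc_next_def by auto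
    then show thesis using that by blast
  next
    case 3
    then have "even a \<and> a + 4 \<le> N \<and> b = a + 3 \<or> a = N - 2 \<and> b = 1
        \<or> odd a \<and> 5 \<le> a \<and> a + 3 \<le> N \<and> b = a - 3 \<or> a = 3 \<and> b = 0
        \<or> a = N - 1 \<and> b = N - 4 \<or> a = 1 \<and> b = N - 2"
      using \<open>a < N\<close> even_N unfolding chord_def
      by (cases "even a"; simp split: if_splits; presburger)
    then show thesis using that by blast
  qed
qed

end

text \<open>Along chords and cycle edges the
  boundary walks descend in steps of 4 through the darts \<open>(e, e - 1)\<close> and ascend in steps of 2
  through the darts \<open>(e, e + 3)\<close>, e even.\<close>

locale face_walk = model +
  fixes f :: "nat \<times> nat \<Rightarrow> nat \<times> nat" and T :: "(nat \<times> nat) set"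
  assumes closed: "f ` T \<subseteq> T"
    and regular: "\<And>x y. y \<noteq> 0 \<Longrightarrow> rot_std N y x \<noteq> 0 \<Longrightarrow> f (x, y) = (y, rot_std N y x)"
begin

lemma walk_step: "(x, y) \<in> T \<Longrightarrow> y \<noteq> 0 \<Longrightarrow> rot_std N y x \<noteq> 0 \<Longrightarrow> (y, rot_std N y x) \<in> T"
  using closed regular by (metis image_subset_iff)

lemma walk_after_prev:
  "(a, y) \<in> T \<Longrightarrow> cyc_prev N y = a \<Longrightarrow> cyc_next N y = b \<Longrightarrow> y < N \<Longrightarrow> y \<noteq> 0 \<Longrightarrow> b \<noteq> 0
    \<Longrightarrow> (y, b) \<in> T"
  using walk_step rot_std_simps by metis

lemma walk_after_next:
  "(a, y) \<in> T \<Longrightarrow> cyc_next N y = a \<Longrightarrow> chord N y = b \<Longrightarrow> y < N \<Longrightarrow> y \<noteq> 0 \<Longrightarrow> b \<noteq> 0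
    \<Longrightarrow> (y, b) \<in> T"
  using walk_step rot_std_simps by metis

lemma walk_after_chord:
  "(a, y) \<in> T \<Longrightarrow> chord N y = a \<Longrightarrow> cyc_prev N y = b \<Longrightarrow> y < N \<Longrightarrow> y \<noteq> 0 \<Longrightarrow> b \<noteq> 0
    \<Longrightarrow> (y, b) \<in> T"
  using walk_step rot_std_simps by metis

lemma walk_forward: "(a, a + 1) \<in> T \<Longrightarrow> a + 3 \<le> N \<Longrightarrow> (a + 1, a + 2) \<in> T"
  by (erule walk_after_prev) (simp_all add: model_values)

lemma walk_chord_down:
  "(a + 1, a) \<in> T \<Longrightarrow> odd a \<Longrightarrow> 5 \<le> a \<Longrightarrow> a + 3 \<le> N \<Longrightarrow> (a, a - 3) \<in> T"
  by (erule walk_after_next) (simp_all add: model_values)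

lemma walk_back_even:
  "(m + 3, m) \<in> T \<Longrightarrow> even m \<Longrightarrow> 2 \<le> m \<Longrightarrow> m + 4 \<le> N \<Longrightarrow> (m, m - 1) \<in> T"
  by (erule walk_after_chord) (simp_all add: model_values)

lemma walk_back_odd: "(e, e + 3) \<in> T \<Longrightarrow> even e \<Longrightarrow> e + 4 \<le> N \<Longrightarrow> (e + 3, e + 2) \<in> T"
  by (erule walk_after_chord) (simp_all add: model_values)

lemma walk_chord_up: "(e + 3, e + 2) \<in> T \<Longrightarrow> even e \<Longrightarrow> e + 6 \<le> N \<Longrightarrow> (e + 2, e + 5) \<in> T"
  by (erule walk_after_next) (simp_all add: model_values)

lemma cycle_darts_mem:
  assumes "(a, a + 1) \<in> T" "a \<le> b" "b + 2 \<le> N"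
  shows "(b, b + 1) \<in> T"
  using assms(2,3)
proof (induction b rule: dec_induct)
  case (step b)
  then show ?case using walk_forward[of b] by simp
qed (use assms(1) in simp)

lemma descending_darts_mem:
  assumes "(e + 4 * k, e + 4 * k - 1) \<in> T" "even e" "2 \<le> e" "e + 4 * k + 2 \<le> N"
  shows "(e, e - 1) \<in> T"
  using assms
proof (induction k)
  case (Suc k)
  define m where "m = e + 4 * k"
  have m: "even m" "2 \<le> m" "m + 6 \<le> N" using Suc.prems unfolding m_def by simp_all
  have "e + 4 * Suc k = m + 3 + 1" "m + 3 + 1 - 1 = m + 3" unfolding m_def by simp_all
  then have "(m + 3 + 1, m + 3) \<in> T" using Suc.prems(1) by (simp only:)
  then have "(m + 3, m + 3 - 3) \<in> T" by (rule walk_chord_down) (use m in simp_all)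
  then have "(m, m - 1) \<in> T" using walk_back_even m by simp
  then show ?case using Suc unfolding m_def by simp
qed simp

lemma chord_darts_mem:
  assumes "(e, e + 3) \<in> T" "even e" "e + 2 * k + 4 \<le> N"
  shows "(e + 2 * k, e + 2 * k + 3) \<in> T \<and> (e + 2 * k + 3, e + 2 * k + 2) \<in> T"
  using assms(3)
proof (induction k)
  case 0
  then show ?case using assms walk_back_odd by simp
next
  case (Suc k)
  define m where "m = e + 2 * k"
  have m: "even m" "m + 6 \<le> N" using Suc.prems assms(2) unfolding m_def by simp_all
  have "(m + 3, m + 2) \<in> T" using Suc unfolding m_def by simp
  then have A: "(m + 2, m + 2 + 3) \<in> T"
    using walk_chord_up[OF _ m] by (simp add: ac_simps)
  moreover have "(m + 2 + 3, m + 2 + 2) \<in> T" using walk_back_odd[OF A] m by simp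
  moreover have "e + 2 * Suc k = m + 2" unfolding m_def by simp
  ultimately show ?case by simp
qed

lemma back_even_darts_mem:
  assumes "(N - 1, N - 4) \<in> T" "(1, N - 2) \<in> T \<or> N mod 4 = 2"
  shows "(1, N - 2) \<in> T" and "even e \<Longrightarrow> 2 \<le> e \<Longrightarrow> e + 2 \<le> N \<Longrightarrow> (e, e - 1) \<in> T"
proof -
  have "(N - 4, N - 5) \<in> T"
    by (rule walk_after_chord[OF assms(1)]) (use N_ge_6 even_N in \<open>simp_all add: model_values\<close>)
  show chord_one: "(1, N - 2) \<in> T"
  proof (cases "(1, N - 2) \<in> T")
    case False
    then have "N mod 4 = 2" using assms(2) by blast
    then have "\<exists>k. N - 4 = 2 + 4 * k" using N_ge_6 by presburger
    then obtain k where k: "N - 4 = 2 + 4 * k" ..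
    moreover have "N - 5 = 2 + 4 * k - 1" using k by linarith
    ultimately have "(2 + 4 * k, 2 + 4 * k - 1) \<in> T" using \<open>(N - 4, N - 5) \<in> T\<close> by simp
    then have "(2, 2 - 1) \<in> T" by (rule descending_darts_mem) (use k N_ge_6 in simp_all)
    then have "(2, 1) \<in> T" by simp
    then show ?thesis by (rule walk_after_next) (use N_ge_6 in \<open>simp_all add: model_values\<close>)
  qed
  have "(N - 2, N - 3) \<in> T"
    by (rule walk_after_chord[OF chord_one]) (use N_ge_6 in \<open>simp_all add: model_values\<close>)
  assume e: "even e" "2 \<le> e" "e + 2 \<le> N"
  then have "\<exists>k. N - 2 = e + 4 * k \<or> N - 4 = e + 4 * k" using even_N by presburger
  then obtain k where k: "N - 2 = e + 4 * k \<or> N - 4 = e + 4 * k" ..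
  have "(e + 4 * k, e + 4 * k - 1) \<in> T"
  proof (cases "N - 2 = e + 4 * k")
    case True
    moreover have "N - 3 = e + 4 * k - 1" using True by linarith
    ultimately show ?thesis using \<open>(N - 2, N - 3) \<in> T\<close> by simp
  next
    case False
    then have "N - 4 = e + 4 * k" "N - 5 = e + 4 * k - 1" using k by linarith+
    then show ?thesis using \<open>(N - 4, N - 5) \<in> T\<close> by simp
  qed
  moreover have "e + 4 * k + 2 \<le> N" using k N_ge_6 by linarith
  ultimately show "(e, e - 1) \<in> T" using descending_darts_mem e(1,2) by blast
qed

lemma chord_up_darts_mem:
  assumes "(3, 2) \<in> T" "even e" "2 \<le> e" "e + 4 \<le> N"
  shows "(e, e + 3) \<in> T \<and> (e + 3, e + 2) \<in> T"
proof -
  have "(2, 5) \<in> T"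
    by (rule walk_after_next[OF assms(1)]) (use N_ge_6 in \<open>simp_all add: model_values\<close>)
  then have start: "(2, 2 + 3) \<in> T" by simp
  have "\<exists>j. e = 2 + 2 * j" using assms(2,3) by presburger
  then obtain j where j: "e = 2 + 2 * j" ..
  show ?thesis unfolding j by (rule chord_darts_mem[OF start]) (use assms j in simp_all)
qed

lemma regular_darts_mem:
  assumes "(1, 2) \<in> T" "(N - 1, N - 4) \<in> T" "(1, N - 2) \<in> T \<or> N mod 4 = 2" "(3, 2) \<in> T"
    and "(a, b) \<in> darts (model_edges N)" "a \<noteq> 0" "b \<noteq> 0"
  shows "(a, b) \<in> T"
proof -
  have "(1, 1 + 1) \<in> T" using assms(1) by (simp only: one_add_one)
  then have forward: "(c, c + 1) \<in> T" if "1 \<le> c" "c + 2 \<le> N" for c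
    using cycle_darts_mem that by blast
  have chord_one: "(1, N - 2) \<in> T"
    and back_even: "even e \<Longrightarrow> 2 \<le> e \<Longrightarrow> e + 2 \<le> N \<Longrightarrow> (e, e - 1) \<in> T" for e
    using back_even_darts_mem[OF assms(2,3)] by blast+
  have chords: "(e, e + 3) \<in> T \<and> (e + 3, e + 2) \<in> T" if "even e" "2 \<le> e" "e + 4 \<le> N" for e
    using chord_up_darts_mem[OF assms(4) that] .
  have "(N - 4 + 3, N - 4 + 2) \<in> T" using chords[of "N - 4"] N_ge_6 even_N by simp
  moreover have "N - 4 + 3 = N - 1" "N - 4 + 2 = N - 2" using N_ge_6 by simp_all
  ultimately have "(N - 1, N - 2) \<in> T" by (simp only:)
  then have chord_last: "(N - 2, 1) \<in> T"
    by (rule walk_after_next) (use N_ge_6 in \<open>simp_all add: model_values\<close>)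
  from assms(5) show ?thesis
  proof (cases rule: model_darts_cases)
    case back_odd
    show ?thesis
    proof (cases "a = 3")
      case False
      have "a < N" using darts_subset[OF model_edges_subset] assms(5) by auto
      then have "even (a - 3)" "2 \<le> a - 3" "a - 3 + 4 \<le> N"
        using back_odd False even_N by presburger+
      then have "(a - 3 + 3, a - 3 + 2) \<in> T" using chords by blast
      moreover have "a - 3 + 3 = a" "a - 3 + 2 = b" using back_odd by simp_all
      ultimately show ?thesis by (simp only:)
    qed (use back_odd assms(4) in simp)
  next
    case chord_down
    then have "(a + 1, a + 1 - 1) \<in> T" using back_even[of "a + 1"] by simp
    then show ?thesis using walk_chord_down chord_down by simp
  qed (use assms forward back_even chords chord_last chord_one in auto)
qed

end

context model
begin

lemma model_darts:
  "(0, 1) \<in> darts (model_edges N)" "(1, N - 2) \<in> darts (model_edges N)"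
  "(1, 2) \<in> darts (model_edges_del N)" "(1, N - 2) \<in> darts (model_edges_del N)"
  using neighbors_model[of 0] neighbors_model[of 1] neighbors_model_del[of 1] model_values N_ge_6
  by (auto simp: mem_darts_iff)

lemma face_perm_full:
  "y \<noteq> 0 \<Longrightarrow> face_perm (rot_full N) (x, y) = (y, rot_std N y x)"
  unfolding face_perm_def rot_full_def by simp

lemma face_perm_del:
  "rot_std N y x \<noteq> 0 \<Longrightarrow> face_perm (rot_del N) (x, y) = (y, rot_std N y x)"
  unfolding face_perm_def rot_del_def by simp

text \<open>At the two places where the walk of \<open>rot_del\<close> would enter vertex 0 it skips ahead.\<close>

lemma face_perm_del_skips:
  "face_perm (rot_del N) (N - 2, N - 1) = (N - 1, N - 4)" "face_perm (rot_del N) (4, 3) = (3, 2)"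
proof -
  have "cyc_prev N (N - 1) = N - 2" "cyc_next N (N - 1) = 0" "chord N (N - 1) = N - 4"
    "cyc_prev N 3 = 2" "cyc_next N 3 = 4" "chord N 3 = 0"
    using N_ge_6 even_N unfolding cyc_prev_def cyc_next_def chord_def by auto
  moreover have "N - 1 < N" "(3::nat) < N" using N_ge_6 by simp_all
  ultimately have "rot_std N (N - 1) (N - 2) = 0" "rot_std N (N - 1) 0 = N - 4"
    "rot_std N 3 4 = 0" "rot_std N 3 0 = 2"
    using rot_std_simps[of "N - 1"] rot_std_simps[of 3] by metis+
  then show "face_perm (rot_del N) (N - 2, N - 1) = (N - 1, N - 4)"
    "face_perm (rot_del N) (4, 3) = (3, 2)"
    unfolding face_perm_def rot_del_def fst_conv snd_conv by simp_all
qed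

lemma darts_del_covered:
  assumes closed: "face_perm (rot_del N) ` T \<subseteq> T"
    and "(1, 2) \<in> T" "(1, N - 2) \<in> T \<or> N mod 4 = 2"
  shows "darts (model_edges_del N) \<subseteq> T"
proof -
  interpret face_walk N "face_perm (rot_del N)" T
    using closed face_perm_del by unfold_locales auto
  have "(1, 1 + 1) \<in> T" using assms(2) by (simp only: one_add_one)
  then have "(N - 2, N - 2 + 1) \<in> T" using cycle_darts_mem N_ge_6 by simp
  then have "(N - 2, N - 1) \<in> T" using N_ge_6 by (simp add: Suc_diff_Suc numeral_2_eq_2)
  then have top: "(N - 1, N - 4) \<in> T" using closed face_perm_del_skips(1) by force
  then have "(4, 4 - 1) \<in> T" using back_even_darts_mem(2)[where e=4, OF _ assms(3)] N_ge_6 by simp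
  then have "(3, 2) \<in> T" using closed face_perm_del_skips(2) by force
  show ?thesis
  proof
    fix d assume d: "d \<in> darts (model_edges_del N)"
    then obtain a b where ab: "d = (a, b)" "a \<noteq> 0" "b \<noteq> 0"
      using darts_subset[OF model_edges_del_subset] by fastforce
    moreover have "d \<in> darts (model_edges N)" using d unfolding model_edges_del_def darts_def by auto
    ultimately show "d \<in> T" using regular_darts_mem assms(2,3) top \<open>(3, 2) \<in> T\<close> by blast
  qed
qed

lemma rot_full_zero_steps:
  "rot_std N (N - 1) (N - 2) = 0" "rot_full N 0 (N - 1) = 3" "rot_std N 1 (N - 2) = 0"
  "rot_full N 0 1 = N - 1" "rot_std N 3 4 = 0"
proof -
  have "cyc_prev N (N - 1) = N - 2" "cyc_next N (N - 1) = 0" "cyc_prev N 0 = N - 1"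
    "cyc_next N 0 = 1" "chord N 0 = 3" "cyc_prev N 1 = 0" "chord N 1 = N - 2"
    "cyc_next N 3 = 4" "chord N 3 = 0"
    using N_ge_6 even_N unfolding cyc_prev_def cyc_next_def chord_def by auto
  moreover have "N - 1 < N" "(1::nat) < N" "(3::nat) < N" using N_ge_6 by simp_all
  ultimately show "rot_std N (N - 1) (N - 2) = 0" "rot_full N 0 (N - 1) = 3"
    "rot_std N 1 (N - 2) = 0" "rot_full N 0 1 = N - 1" "rot_std N 3 4 = 0"
    using rot_std_simps[of "N - 1"] rot_std_simps[of 1] rot_std_simps[of 3] rot_full_zero
    by metis+
qed

lemma full_walk_darts_mem:
  assumes closed: "face_perm (rot_full N) ` T \<subseteq> T"
    and "(0, 1) \<in> T" "(1, N - 2) \<in> T \<or> N mod 4 = 2"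
  shows "(N - 1, 0) \<in> T" "(0, N - 1) \<in> T" "(0, 3) \<in> T" "(3, 0) \<in> T" "(1, 0) \<in> T"
    "(1, 2) \<in> T" "(3, 2) \<in> T" "(N - 1, N - 4) \<in> T"
proof -
  interpret face_walk N "face_perm (rot_full N)" T
    using closed face_perm_full by unfold_locales auto
  have step: "(y, z) \<in> T" if "(x, y) \<in> T" "y \<noteq> 0" "rot_std N y x = z" for x y z
    using face_perm_full[of y x] that closed by (metis image_subset_iff)
  have step_zero: "(0, z) \<in> T" if "(x, 0) \<in> T" "rot_full N 0 x = z" for x z
    using that closed unfolding face_perm_def by (metis fst_conv snd_conv image_subset_iff)
  note rot = rot_full_zero_steps
  have "(0, 0 + 1) \<in> T" using assms(2) by simp
  then have forward: "(a, a + 1) \<in> T" if "a + 2 \<le> N" for a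
    using cycle_darts_mem that by blast
  have "(N - 2, N - 2 + 1) \<in> T" using forward N_ge_6 by simp
  then have "(N - 2, N - 1) \<in> T" using N_ge_6 by (simp add: Suc_diff_Suc numeral_2_eq_2)
  then show wrap: "(N - 1, 0) \<in> T" using step rot(1) N_ge_6 by simp
  then have "(0, 0 + 3) \<in> T" using step_zero rot(2) by simp
  then have chords: "(2 * k, 2 * k + 3) \<in> T \<and> (2 * k + 3, 2 * k + 2) \<in> T" if "2 * k + 4 \<le> N" for k
    using chord_darts_mem[of 0 k] that by simp
  have "\<exists>k. N = 2 * k + 4" using even_N N_ge_6 by presburger
  then obtain k where k: "N = 2 * k + 4" ..
  then have "N - 1 = 2 * k + 3" "N - 2 = 2 * k + 2" "(2 * k + 3, 2 * k + 2) \<in> T"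
    using chords[of k] by simp_all
  then have "(N - 1, N - 2) \<in> T" by (simp only:)
  then have "(N - 2, 1) \<in> T" by (rule walk_after_next) (use model_values N_ge_6 in simp_all)
  then show "(1, 0) \<in> T" using step rot(3) by simp
  then show "(0, N - 1) \<in> T" using step_zero rot(4) by simp
  then show top: "(N - 1, N - 4) \<in> T"
    by (rule walk_after_next) (use model_values N_ge_6 even_N in simp_all)
  then have "(4, 4 - 1) \<in> T" using back_even_darts_mem(2)[where e=4, OF _ assms(3)] N_ge_6 by simp
  then show "(3, 0) \<in> T" using step rot(5) by simp
  show "(3, 2) \<in> T" "(0, 3) \<in> T" using chords[of 0] N_ge_6 by (simp_all add: numeral_2_eq_2)
  show "(1, 2) \<in> T" using forward[of 1] N_ge_6 by (simp add: numeral_2_eq_2)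
qed

lemma darts_full_covered:
  assumes closed: "face_perm (rot_full N) ` T \<subseteq> T"
    and "(0, 1) \<in> T" "(1, N - 2) \<in> T \<or> N mod 4 = 2"
  shows "darts (model_edges N) \<subseteq> T"
proof
  interpret face_walk N "face_perm (rot_full N)" T
    using closed face_perm_full by unfold_locales auto
  note walk = full_walk_darts_mem[OF assms]
  have "cyc_prev N 0 = N - 1" "cyc_next N 0 = 1" "chord N 0 = 3"
    using N_ge_6 unfolding cyc_prev_def cyc_next_def chord_def by auto
  then have zero: "neighbors (model_edges N) 0 = {N - 1, 1, 3}"
    using neighbors_model[of 0] N_ge_6 by simp
  fix d assume d: "d \<in> darts (model_edges N)"
  then obtain a b where ab: "d = (a, b)" by fastforce
  show "d \<in> T"
  proof (cases "a = 0 \<or> b = 0")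
    case True
    have "(b, a) \<in> darts (model_edges N)" using d ab unfolding darts_def by (auto simp: insert_commute)
    then have "a = 0 \<and> b \<in> {N - 1, 1, 3} \<or> b = 0 \<and> a \<in> {N - 1, 1, 3}"
      using True d ab zero by (auto simp: mem_darts_iff)
    then show ?thesis using ab walk assms(2) by auto
  qed (use regular_darts_mem walk assms(3) d ab in blast)
qed

lemma num_faces_full_le: "num_faces (model_edges N) (rot_full N) \<le> (if N mod 4 = 2 then 1 else 2)"
  by (rule num_faces_le_two_orbits[OF rotation_system_full model_edges_subset _ model_darts(1,2)])
    (simp_all add: darts_full_covered)

lemma num_faces_del_le: "num_faces (model_edges_del N) (rot_del N) \<le> (if N mod 4 = 2 then 1 else 2)"
  by (rule num_faces_le_two_orbits[OF rotation_system_del model_edges_del_subset _ model_darts(3,4)])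
    (simp_all add: darts_del_covered)

end

section \<open>The neckband\<close>

text \<open>Relabelling of the model graph sending its vertex 0 to the vertex v of the neckband:
  a rotation of the cycle if v is odd, a reflection if v is even. In both cases even model
  vertices go to odd neckband vertices, so model chords go to neckband chords.\<close>

definition neckband_relabel :: "nat \<Rightarrow> nat \<Rightarrow> nat \<Rightarrow> nat" where
  "neckband_relabel N v y = (if odd v then (if y + v \<le> N then y + v else y + v - N)
                             else (if y < v then v - y else v + N - y))"

locale model_at = model +
  fixes v :: nat
  assumes v_range: "1 \<le> v" "v \<le> N"
begin

abbreviation "p \<equiv> neckband_relabel N v"

lemma relabel_range: "y < N \<Longrightarrow> p y \<in> {1..N}"
  using v_range unfolding neckband_relabel_def by auto

lemma relabel_zero: "p 0 = v"
  using v_range unfolding neckband_relabel_def by auto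

lemma inj_on_relabel: "inj_on p {0..<N}"
  unfolding inj_on_def neckband_relabel_def using v_range by (auto split: if_splits)

lemma relabel_image: "p ` {0..<N} = {1..N}"
proof (rule card_subset_eq)
  show "p ` {0..<N} \<subseteq> {1..N}" using relabel_range by auto
  show "card (p ` {0..<N}) = card {1..N}" using card_image[OF inj_on_relabel] by simp
qed simp

lemma relabel_image_del: "p ` {1..<N} = {1..N} - {v}"
proof -
  have "{1..<N} = {0..<N} - {0::nat}" by auto
  then have "p ` {1..<N} = p ` ({0..<N} - {0})" by simp
  also have "\<dots> = p ` {0..<N} - p ` {0}"
    by (rule inj_on_image_set_diff[OF inj_on_relabel]) (use N_ge_6 in auto)
  also have "\<dots> = {1..N} - {v}" using relabel_image relabel_zero by simp
  finally show ?thesis .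
qed

lemma relabel_cycle:
  assumes "x < N"
  shows "\<exists>i\<in>{1..N}. p ` {x, cyc_next N x} = {i, if i = N then 1 else i + 1}"
proof (cases "odd v")
  case True
  then have "p (cyc_next N x) = (if p x = N then 1 else p x + 1)"
    using v_range assms N_ge_6 unfolding neckband_relabel_def cyc_next_def by auto
  then have "p ` {x, cyc_next N x} = {p x, if p x = N then 1 else p x + 1}" by simp
  then show ?thesis using relabel_range[OF assms] by blast
next
  case False
  then have "p x = (if p (cyc_next N x) = N then 1 else p (cyc_next N x) + 1)"
    using v_range assms N_ge_6 unfolding neckband_relabel_def cyc_next_def by auto
  then have "p ` {x, cyc_next N x} =
      {p (cyc_next N x), if p (cyc_next N x) = N then 1 else p (cyc_next N x) + 1}"
    by (simp add: insert_commute)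
  then show ?thesis using relabel_range model_less(2)[OF assms] by blast
qed

lemma relabel_chord_odd:
  assumes "odd v" "even x" "x < N"
  shows "odd (p x) \<and> p (chord N x) = (if p x + 1 = N then 2 else p x + 3)"
proof -
  have odd_px: "odd (p x)"
    using assms even_N unfolding neckband_relabel_def by (auto simp: dvd_diff_nat)
  then have "p x \<noteq> N" "p x + 2 \<noteq> N" using even_N by presburger+
  moreover have "p x \<in> {1..N}" using relabel_range assms by simp
  ultimately show ?thesis
    using odd_px assms(1-3) v_range unfolding neckband_relabel_def chord_def
    by (auto split: if_splits; arith)
qed

lemma relabel_chord_even:
  assumes "even v" "even x" "x < N"
  shows "odd (p (chord N x)) \<and> p x = (if p (chord N x) + 1 = N then 2 else p (chord N x) + 3)"
proof -
  have c: "chord N x < N" "odd (chord N x)" using model_less(3) even_chord_iff assms by auto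
  then have odd_pc: "odd (p (chord N x))"
    using assms(1) even_N unfolding neckband_relabel_def by (auto simp: dvd_diff_nat)
  then have "p (chord N x) \<noteq> N" "p (chord N x) + 2 \<noteq> N" using even_N by presburger+
  moreover have "p (chord N x) \<in> {1..N}" using relabel_range c by simp
  ultimately show ?thesis
    using odd_pc assms(1-3) v_range unfolding neckband_relabel_def chord_def
    by (auto split: if_splits; arith)
qed

lemma relabel_chord:
  assumes "x < N" "even x"
  shows "\<exists>i\<in>{1..N div 2}. p ` {x, chord N x} = {2 * i - 1, if 2 * i = N then 2 else 2 * i + 2}"
proof -
  obtain w where w: "odd w" "w \<in> {1..N}" "p ` {x, chord N x} = {w, if w + 1 = N then 2 else w + 3}"
  proof (cases "odd v")
    case True
    then show ?thesis using that relabel_chord_odd[OF True assms(2,1)] relabel_range assms by auto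
  next
    case False
    then show ?thesis
      using that relabel_chord_even[OF _ assms(2,1)] relabel_range model_less(3) assms
      by (auto simp: insert_commute)
  qed
  define i where "i = (w + 1) div 2"
  have i: "2 * i = w + 1" unfolding i_def using w(1) by simp
  then have i_range: "i \<in> {1..N div 2}" using w(2) even_N by auto
  have "2 * i - 1 = w" "2 * i + 2 = w + 3" "(2 * i = N) = (w + 1 = N)"
    using i by simp_all
  then have "p ` {x, chord N x} = {2 * i - 1, if 2 * i = N then 2 else 2 * i + 2}"
    unfolding w(3) by (simp only:)
  with i_range show ?thesis by blast
qed

lemma neckband_edges_eq:
  "neckband_E (N div 2) = (\<lambda>i. {i, if i = N then 1 else i + 1}) ` {1..N}
     \<union> (\<lambda>i. {2 * i - 1, if 2 * i = N then 2 else 2 * i + 2}) ` {1..N div 2}"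
proof -
  have cycle: "{{i, i mod N + 1} | i. i \<in> {1..N}} = (\<lambda>i. {i, if i = N then 1 else i + 1}) ` {1..N}"
  proof -
    have "{{i, i mod N + 1} | i. i \<in> {1..N}} = (\<lambda>i. {i, i mod N + 1}) ` {1..N}" by blast
    also have "\<dots> = (\<lambda>i. {i, if i = N then 1 else i + 1}) ` {1..N}"
      by (rule image_cong) auto
    finally show ?thesis .
  qed
  have wrap: "(2 * i + 1) mod N + 1 = (if 2 * i = N then 2 else 2 * i + 2)" if "i \<in> {1..N div 2}" for i
  proof (cases "2 * i = N")
    case True
    then show ?thesis using N_ge_6 by (simp add: mod_Suc)
  next
    case False
    then have "2 * i + 1 < N" using that even_N by auto
    then show ?thesis using False by simp
  qed
  have chords: "{{2 * i - 1, (2 * i + 1) mod N + 1} | i. i \<in> {1..N div 2}} =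
      (\<lambda>i. {2 * i - 1, if 2 * i = N then 2 else 2 * i + 2}) ` {1..N div 2}"
  proof -
    have "{{2 * i - 1, (2 * i + 1) mod N + 1} | i. i \<in> {1..N div 2}} =
        (\<lambda>i. {2 * i - 1, (2 * i + 1) mod N + 1}) ` {1..N div 2}" by blast
    also have "\<dots> = (\<lambda>i. {2 * i - 1, if 2 * i = N then 2 else 2 * i + 2}) ` {1..N div 2}"
      by (rule image_cong) (simp_all only: wrap)
    finally show ?thesis .
  qed
  have half: "2 * (N div 2) = N" using even_N by simp
  show ?thesis unfolding neckband_E_def half cycle chords ..
qed

lemma relabel_model_edge:
  assumes "e \<in> model_edges N"
  shows "p ` e \<in> neckband_E (N div 2)"
proof -
  consider x where "x < N" "e = {x, cyc_next N x}" | x where "x < N" "even x" "e = {x, chord N x}"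
    using assms unfolding model_edges_def by blast
  then show ?thesis
  proof cases
    case 1
    then obtain i where "i \<in> {1..N}" "p ` e = {i, if i = N then 1 else i + 1}"
      using relabel_cycle by blast
    then show ?thesis unfolding neckband_edges_eq by blast
  next
    case 2
    then obtain i where "i \<in> {1..N div 2}" "p ` e = {2 * i - 1, if 2 * i = N then 2 else 2 * i + 2}"
      using relabel_chord by blast
    then show ?thesis unfolding neckband_edges_eq by blast
  qed
qed

sublocale full: relabelling p "{0..<N}" "model_edges N"
  by unfold_locales (use inj_on_relabel model_edges_subset in auto)

sublocale del: relabelling p "{1..<N}" "model_edges_del N"
  by unfold_locales (use inj_on_relabel model_edges_del_subset in \<open>auto intro: inj_on_subset\<close>)

lemma relabel_model_edges: "(`) p ` model_edges N = neckband_E (N div 2)"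
proof (rule card_seteq)
  show "finite (neckband_E (N div 2))" unfolding neckband_edges_eq by simp
  show "(`) p ` model_edges N \<subseteq> neckband_E (N div 2)" using relabel_model_edge by auto
  have "card (neckband_E (N div 2)) \<le> N + N div 2" unfolding neckband_edges_eq
    by (rule order_trans[OF card_Un_le]) (intro add_mono order_trans[OF card_image_le]; simp)
  then show "card (neckband_E (N div 2)) \<le> card ((`) p ` model_edges N)"
    using full.card_edges_image card_model_edges by simp
qed

lemma relabel_model_edges_del: "(`) p ` model_edges_del N = {e \<in> neckband_E (N div 2). v \<notin> e}"
proof -
  have "v \<in> p ` e \<longleftrightarrow> 0 \<in> e" if "e \<in> model_edges N" for e
  proof -
    have "e \<subseteq> {0..<N}" "(0::nat) \<in> {0..<N}" using that model_edges_subset N_ge_6 by auto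
    then show ?thesis using inj_on_image_mem_iff[OF inj_on_relabel] relabel_zero by metis
  qed
  then show ?thesis
    unfolding model_edges_del_def relabel_model_edges[symmetric] by auto
qed

lemma num_faces_le_parity:
  assumes "F \<le> (if N mod 4 = 2 then 1 else 2)" "b mod 2 = (int (N div 2) + 1) mod 2"
  shows "int F \<le> 1 + b mod 2"
  using assms even_N by (cases "N mod 4 = 2") presburger+

lemma max_genus_neckband: "max_genus {1..N} (neckband_E (N div 2)) = (int (N div 2) + 1) div 2"
proof -
  let ?E = "neckband_E (N div 2)" and ?\<rho> = "relabel_rotation p {0..<N} (rot_full N)"
  have V: "{1..N} = p ` {0..<N}" and E: "?E = (`) p ` model_edges N"
    using relabel_image relabel_model_edges by simp_all
  have betti: "betti {1..N} ?E = int (N div 2) + 1"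
    unfolding betti_def E full.card_edges_image card_model_edges by simp
  have "max_genus {1..N} ?E = betti {1..N} ?E div 2"
  proof (rule max_genus_eq_half_betti)
    show "\<forall>e\<in>?E. e \<subseteq> {1..N}" unfolding V E by (rule full.image_edges_subset)
    show "darts ?E \<noteq> {}" unfolding E full.darts_image using model_darts(1) by auto
    show "is_rotation_system {1..N} ?E ?\<rho>"
      unfolding V E by (rule full.rotation_system_image[OF rotation_system_full])
    show "int (num_faces ?E ?\<rho>) \<le> 1 + betti {1..N} ?E mod 2"
      using full.num_faces_image_le[OF rotation_system_full] num_faces_full_le betti
      unfolding E by (intro num_faces_le_parity) simp_all
  qed simp
  then show ?thesis unfolding betti .
qed

lemma neckband_delete:
  "graph_connected ({1..N} - {v}) {e \<in> neckband_E (N div 2). v \<notin> e} \<and>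
   max_genus ({1..N} - {v}) {e \<in> neckband_E (N div 2). v \<notin> e} = (int (N div 2) - 1) div 2"
proof -
  let ?V = "{1..N} - {v}" and ?E = "{e \<in> neckband_E (N div 2). v \<notin> e}"
  let ?\<rho> = "relabel_rotation p {1..<N} (rot_del N)"
  have V: "?V = p ` {1..<N}" and E: "?E = (`) p ` model_edges_del N"
    using relabel_image_del relabel_model_edges_del by simp_all
  have betti: "betti ?V ?E = int (N div 2) - 1"
  proof -
    have "card ?V = N - 1" using v_range by simp
    then show ?thesis unfolding betti_def E del.card_edges_image card_model_edges_del
      using N_ge_6 by simp
  qed
  have "max_genus ?V ?E = betti ?V ?E div 2"
  proof (rule max_genus_eq_half_betti)
    show "\<forall>e\<in>?E. e \<subseteq> ?V" unfolding V E by (rule del.image_edges_subset)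
    show "darts ?E \<noteq> {}" unfolding E del.darts_image using model_darts(3) by auto
    show "is_rotation_system ?V ?E ?\<rho>"
      unfolding V E by (rule del.rotation_system_image[OF rotation_system_del])
    show "int (num_faces ?E ?\<rho>) \<le> 1 + betti ?V ?E mod 2"
      using del.num_faces_image_le[OF rotation_system_del] num_faces_del_le betti
      unfolding E by (intro num_faces_le_parity) (simp_all, presburger)
  qed simp
  moreover have "graph_connected ?V ?E"
    unfolding V E by (rule del.connected_image[OF connected_model_del])
  ultimately show ?thesis unfolding betti by simp
qed

end

theorem theorem2p1:
  fixes n v :: nat
  assumes "n \<ge> 3" and "v \<in> neckband_V n"
  shows "graph_connected (fst (delete_vertex (neckband_V n) (neckband_E n) v))
                         (snd (delete_vertex (neckband_V n) (neckband_E n) v))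
       \<and> max_genus (fst (delete_vertex (neckband_V n) (neckband_E n) v))
                   (snd (delete_vertex (neckband_V n) (neckband_E n) v))
         = max_genus (neckband_V n) (neckband_E n) - 1"
proof -
  interpret model_at "2 * n" v
    by unfold_locales (use assms in \<open>auto simp: neckband_V_def\<close>)
  have "(int n - 1) div 2 = (int n + 1) div 2 - 1" by presburger
  then show ?thesis
    using max_genus_neckband neckband_delete unfolding delete_vertex_def neckband_V_def by simp
qed

end
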